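(* Let $n\ge2$ and $\xi=(\xi^{n-1},\xi_n)\in M_a^{n-1}\times M_s\subset[M(H^\infty(\mathbb{D}))]^n$. Let $\zeta=\{z_k\}_{k\in\mathbb{N}}\subset\mathbb{D}^{n-1}$ be a sequence that is the Cartesian product of interpolating sequences for $H^\infty(\mathbb{D})$ in the coordinate disks, is interpolating for $H^\infty(\mathbb{D}^{n-1})$, and whose closure in $[M(H^\infty(\mathbb{D}))]^{n-1}$ contains $\xi^{n-1}$. Let $R:H^\infty(\mathbb{D}^n)\to H^\infty(\mathbb{D}\times\mathbb{N})$, $R(f)(k):=f(z_k,\cdot)$, and $R^*(\varphi)=\varphi\circ R$. Let $G$ be an analytic disk in $M(H^\infty(\mathbb{D}\times\mathbb{N}))$ such that $R^*(G)$ contains a point $\eta\in F_\xi=\pi_n^{-1}(\xi)$. Then $R^*(G)\subset F_\xi$.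
   Context: $\mathbb{D}$ is the open unit disk; $M(B)$ is the maximal ideal space of a commutative unital Banach algebra $B$ with weak-* topology, $\hat f$ the Gelfand transform. $H^\infty(\mathbb{D}\times\mathbb{N})$ is the algebra of sequences $(g_k)_{k\in\mathbb{N}}$ of functions in $H^\infty(\mathbb{D})$ with $\sup_k\|g_k\|_\infty<\infty$, normed by this supremum. An analytic disk in $M(H^\infty(\mathbb{D}\times\mathbb{N}))$ is the image of a continuous injective map $\tau:\mathbb{D}\to M(H^\infty(\mathbb{D}\times\mathbb{N}))$ with $\hat f\circ\tau\in H^\infty(\mathbb{D})$ for all $f$ in the algebra. Interpolating sequences: every bounded sequence of values is attained by a function of the algebra. $\mathbb{D}^n$ embeds into $M(H^\infty(\mathbb{D}^n))$ by point evaluations with closure $\operatorname{cl}(\mathbb{D}^n)$; $\mathbb{D}^m$ embeds in $[M(H^\infty(\mathbb{D}))]^m$ coordinatewise. $\pi_n(\varphi)=(\varphi\circ\iota_1,\dots,\varphi\circ\iota_n)$ with $\iota_j(f)(z)=f(z_j)$; $F_\xi:=\pi_n^{-1}(\xi)\cap\operatorname{cl}(\mathbb{D}^n)$, which in this setting equals $\pi_n^{-1}(\xi)$. Pseudohyperbolic distance on $M(H^\infty(\mathbb{D}))$: $\rho(\xi,\eta)=\sup\{|\hat f(\eta)|:\hat f(\xi)=0,\|f\|_\infty\le1\}$; Gleason parts are the classes $\{\eta:\rho(\xi,\eta)<1\}$; $M_a$ is the union of non-singleton Gleason parts and $M_s$ its complement. *)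

theory Defs
  imports "HOL-Analysis.Analysis"
begin

definition polydisk :: "nat \<Rightarrow> (nat \<Rightarrow> complex) set" where
  "polydisk n = {z. (\<forall>i<n. z i \<in> ball 0 1) \<and> (\<forall>i. n \<le> i \<longrightarrow> z i = 0)}"

text \<open>H-infinity of the disk; functions are normalised to vanish off the disk,
  so that the algebra operations are pointwise and the unit is the indicator of the disk.\<close>
definition Hinf_disk :: "(complex \<Rightarrow> complex) set" where
  "Hinf_disk = {f. f holomorphic_on ball 0 1 \<and> bounded (f ` ball 0 1)
                  \<and> (\<forall>w. w \<notin> ball 0 1 \<longrightarrow> f w = 0)}"

definition Hinf_poly :: "nat \<Rightarrow> ((nat \<Rightarrow> complex) \<Rightarrow> complex) set" where
  "Hinf_poly n = {f. continuous_on (polydisk n) f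
        \<and> (\<forall>z\<in>polydisk n. \<forall>i<n. (\<lambda>w. f (z(i := w))) holomorphic_on ball 0 1)
        \<and> bounded (f ` polydisk n)
        \<and> (\<forall>z. z \<notin> polydisk n \<longrightarrow> f z = 0)}"

text \<open>H-infinity(D x N): a sequence (g_k) is encoded as g(k,w) = g_k(w).\<close>
definition Hinf_DN :: "(nat \<times> complex \<Rightarrow> complex) set" where
  "Hinf_DN = {g. (\<forall>k. (\<lambda>w. g (k, w)) holomorphic_on ball 0 1)
        \<and> bounded (g ` (UNIV \<times> ball 0 1))
        \<and> (\<forall>k w. w \<notin> ball 0 1 \<longrightarrow> g (k, w) = 0)}"

text \<open>Maximal ideal space of a function algebra A (pointwise operations) with unit u:
  the nonzero multiplicative linear functionals (phi u = 1), made extensional.\<close>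
definition characters :: "('a \<Rightarrow> complex) set \<Rightarrow> ('a \<Rightarrow> complex) \<Rightarrow> (('a \<Rightarrow> complex) \<Rightarrow> complex) set" where
  "characters A u = {\<phi>.
      (\<forall>f\<in>A. \<forall>g\<in>A. \<phi> (\<lambda>x. f x + g x) = \<phi> f + \<phi> g \<and> \<phi> (\<lambda>x. f x * g x) = \<phi> f * \<phi> g)
    \<and> (\<forall>c. \<forall>f\<in>A. \<phi> (\<lambda>x. c * f x) = c * \<phi> f)
    \<and> \<phi> u = 1
    \<and> (\<forall>f. f \<notin> A \<longrightarrow> \<phi> f = 0)}"

definition M_disk :: "((complex \<Rightarrow> complex) \<Rightarrow> complex) set" where
  "M_disk = characters Hinf_disk (indicator (ball 0 1))"

definition M_poly :: "nat \<Rightarrow> (((nat \<Rightarrow> complex) \<Rightarrow> complex) \<Rightarrow> complex) set" where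
  "M_poly n = characters (Hinf_poly n) (indicator (polydisk n))"

definition M_DN :: "((nat \<times> complex \<Rightarrow> complex) \<Rightarrow> complex) set" where
  "M_DN = characters Hinf_DN (indicator (UNIV \<times> ball 0 1))"

definition weakstar :: "('a \<Rightarrow> complex) set \<Rightarrow> (('a \<Rightarrow> complex) \<Rightarrow> complex) set
                        \<Rightarrow> (('a \<Rightarrow> complex) \<Rightarrow> complex) topology" where
  "weakstar A M = subtopology
     (topology_generated_by {{\<phi>. \<phi> f \<in> U} | f U. f \<in> A \<and> open U}) M"

definition analytic_disk :: "('a \<Rightarrow> complex) set \<Rightarrow> ('a \<Rightarrow> complex)
                             \<Rightarrow> (('a \<Rightarrow> complex) \<Rightarrow> complex) set \<Rightarrow> bool" where
  "analytic_disk A u G \<longleftrightarrow> (\<exists>\<tau>.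
       \<tau> ` ball 0 1 \<subseteq> characters A u
     \<and> inj_on \<tau> (ball 0 1)
     \<and> continuous_map (top_of_set (ball 0 1)) (weakstar A (characters A u)) \<tau>
     \<and> (\<forall>f\<in>A. (\<lambda>z. \<tau> z f) holomorphic_on ball 0 1 \<and> bounded ((\<lambda>z. \<tau> z f) ` ball 0 1))
     \<and> G = \<tau> ` ball 0 1)"

definition rho :: "((complex \<Rightarrow> complex) \<Rightarrow> complex) \<Rightarrow> ((complex \<Rightarrow> complex) \<Rightarrow> complex) \<Rightarrow> real" where
  "rho \<xi> \<eta> = Sup {cmod (\<eta> f) | f. f \<in> Hinf_disk \<and> \<xi> f = 0 \<and> (\<forall>w\<in>ball 0 1. cmod (f w) \<le> 1)}"

definition gleason_part :: "((complex \<Rightarrow> complex) \<Rightarrow> complex) \<Rightarrow> ((complex \<Rightarrow> complex) \<Rightarrow> complex) set" where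
  "gleason_part \<xi> = {\<eta> \<in> M_disk. rho \<xi> \<eta> < 1}"

definition M_a :: "((complex \<Rightarrow> complex) \<Rightarrow> complex) set" where
  "M_a = {\<xi> \<in> M_disk. \<exists>\<eta>\<in>gleason_part \<xi>. \<eta> \<noteq> \<xi>}"

definition M_s :: "((complex \<Rightarrow> complex) \<Rightarrow> complex) set" where
  "M_s = M_disk - M_a"

definition ev_disk :: "complex \<Rightarrow> (complex \<Rightarrow> complex) \<Rightarrow> complex" where
  "ev_disk a = (\<lambda>f. if f \<in> Hinf_disk then f a else 0)"

definition interpolating_disk :: "(nat \<Rightarrow> complex) \<Rightarrow> bool" where
  "interpolating_disk a \<longleftrightarrow> (\<forall>k. a k \<in> ball 0 1) \<and>
     (\<forall>w::nat \<Rightarrow> complex. bounded (range w) \<longrightarrow> (\<exists>f\<in>Hinf_disk. \<forall>k. f (a k) = w k))"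

definition interpolating_poly :: "nat \<Rightarrow> (nat \<Rightarrow> nat \<Rightarrow> complex) \<Rightarrow> bool" where
  "interpolating_poly m z \<longleftrightarrow> (\<forall>k. z k \<in> polydisk m) \<and>
     (\<forall>w::nat \<Rightarrow> complex. bounded (range w) \<longrightarrow> (\<exists>f\<in>Hinf_poly m. \<forall>k. f (z k) = w k))"

text \<open>iota_j (coordinates indexed 0..n-1) and pi_n; F_xi = pi_n^{-1}(xi).\<close>
definition iota :: "nat \<Rightarrow> nat \<Rightarrow> (complex \<Rightarrow> complex) \<Rightarrow> (nat \<Rightarrow> complex) \<Rightarrow> complex" where
  "iota n j f = (\<lambda>z. if z \<in> polydisk n then f (z j) else 0)"

definition pi_n :: "nat \<Rightarrow> (((nat \<Rightarrow> complex) \<Rightarrow> complex) \<Rightarrow> complex)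
                    \<Rightarrow> nat \<Rightarrow> (complex \<Rightarrow> complex) \<Rightarrow> complex" where
  "pi_n n \<phi> = (\<lambda>j\<in>{..<n}. \<lambda>f. if f \<in> Hinf_disk then \<phi> (iota n j f) else 0)"

definition fiber :: "nat \<Rightarrow> (nat \<Rightarrow> (complex \<Rightarrow> complex) \<Rightarrow> complex)
                     \<Rightarrow> (((nat \<Rightarrow> complex) \<Rightarrow> complex) \<Rightarrow> complex) set" where
  "fiber n \<xi> = {\<phi> \<in> M_poly n. pi_n n \<phi> = \<xi>}"

definition Rop :: "nat \<Rightarrow> (nat \<Rightarrow> nat \<Rightarrow> complex) \<Rightarrow> ((nat \<Rightarrow> complex) \<Rightarrow> complex)
                   \<Rightarrow> nat \<times> complex \<Rightarrow> complex" where
  "Rop n z f = (\<lambda>(k, w). if w \<in> ball 0 1 then f ((z k)(n - 1 := w)) else 0)"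

definition Rstar :: "nat \<Rightarrow> (nat \<Rightarrow> nat \<Rightarrow> complex) \<Rightarrow> ((nat \<times> complex \<Rightarrow> complex) \<Rightarrow> complex)
                     \<Rightarrow> ((nat \<Rightarrow> complex) \<Rightarrow> complex) \<Rightarrow> complex" where
  "Rstar n z \<phi> = (\<lambda>f. if f \<in> Hinf_poly n then \<phi> (Rop n z f) else 0)"

end

theory Submission
  imports Defs "HOL-Complex_Analysis.Complex_Analysis"
begin

text \<open>
  Let \<tau> parametrize the analytic disk G. For j < n - 1 the j-th coordinate of
  pi_n (R^* (\<tau> \<lambda>)) evaluates \<tau> \<lambda> on sequences (f (z_k j))_k that do not depend on w.
  Such a value is a cluster value of the sequence: the indicator of the set of k where the
  sequence is near it is an idempotent on which \<tau> \<lambda> takes the value 1. An idempotent has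
  values 0 and 1 only, so its value is constant along the connected disk; two different values
  at two points of the disk would therefore yield disjoint idempotents both of value 1 at one
  point.

  The last coordinate is the restriction of \<tau> \<lambda> to the functions independent of k. By the
  Schwarz-Pick lemma it stays in one Gleason part, which is a single point because it lies
  in M_s where R^* (G) meets the fiber.
\<close>

lemma bounded_mult_comp:
  fixes f g :: "'a \<Rightarrow> 'b::real_normed_algebra"
  assumes "bounded (f ` S)" and "bounded (g ` S)"
  shows "bounded ((\<lambda>x. f x * g x) ` S)"
proof -
  obtain B C where B: "\<forall>x\<in>S. norm (f x) \<le> B" and C: "\<forall>x\<in>S. norm (g x) \<le> C"
    using assms by (auto simp: bounded_iff)
  have "norm (f x * g x) \<le> B * C" if "x \<in> S" for x
    using B C that norm_mult_ineq[of "f x" "g x"]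
    by (meson mult_mono' norm_ge_zero order_trans)
  then show ?thesis by (auto simp: bounded_iff)
qed

lemma bounded_cmult_comp:
  fixes f :: "'a \<Rightarrow> 'b::real_normed_algebra"
  assumes "bounded (f ` S)"
  shows "bounded ((\<lambda>x. c * f x) ` S)"
proof -
  have "bounded ((\<lambda>x. c) ` S)"
    by (rule finite_imp_bounded) (simp add: image_constant_conv)
  then show ?thesis using bounded_mult_comp assms by blast
qed

lemma Hinf_disk_add: "f \<in> Hinf_disk \<Longrightarrow> g \<in> Hinf_disk \<Longrightarrow> (\<lambda>x. f x + g x) \<in> Hinf_disk"
  and Hinf_disk_mult: "f \<in> Hinf_disk \<Longrightarrow> g \<in> Hinf_disk \<Longrightarrow> (\<lambda>x. f x * g x) \<in> Hinf_disk"
  and Hinf_disk_cmult: "f \<in> Hinf_disk \<Longrightarrow> (\<lambda>x. c * f x) \<in> Hinf_disk"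
  unfolding Hinf_disk_def
  by (auto intro!: holomorphic_intros bounded_plus_comp bounded_mult_comp bounded_cmult_comp)

lemma Hinf_disk_one: "indicator (ball 0 1) \<in> Hinf_disk"
  unfolding Hinf_disk_def
  by (auto intro: holomorphic_transform[of "\<lambda>_. 1"] finite_imp_bounded[OF finite_subset[of _ "{0, 1}"]])

lemma Hinf_DN_add: "f \<in> Hinf_DN \<Longrightarrow> g \<in> Hinf_DN \<Longrightarrow> (\<lambda>x. f x + g x) \<in> Hinf_DN"
  and Hinf_DN_cmult: "f \<in> Hinf_DN \<Longrightarrow> (\<lambda>x. c * f x) \<in> Hinf_DN"
  unfolding Hinf_DN_def
  by (auto intro!: holomorphic_intros bounded_plus_comp bounded_mult_comp bounded_cmult_comp)

lemma Hinf_poly_add: "f \<in> Hinf_poly n \<Longrightarrow> g \<in> Hinf_poly n \<Longrightarrow> (\<lambda>x. f x + g x) \<in> Hinf_poly n"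
  and Hinf_poly_mult: "f \<in> Hinf_poly n \<Longrightarrow> g \<in> Hinf_poly n \<Longrightarrow> (\<lambda>x. f x * g x) \<in> Hinf_poly n"
  and Hinf_poly_cmult: "f \<in> Hinf_poly n \<Longrightarrow> (\<lambda>x. c * f x) \<in> Hinf_poly n"
  unfolding Hinf_poly_def
  by (auto intro!: holomorphic_intros continuous_intros bounded_plus_comp bounded_mult_comp bounded_cmult_comp)

lemma Hinf_poly_one: "indicator (polydisk n) \<in> Hinf_poly n"
proof -
  have "z(i := w) \<in> polydisk n" if "z \<in> polydisk n" "i < n" "w \<in> ball 0 1" for z i w
    using that by (auto simp: polydisk_def)
  then show ?thesis
    unfolding Hinf_poly_def
    by (auto intro: holomorphic_transform[of "\<lambda>_. 1"] continuous_on_cong[THEN iffD2, OF refl _ continuous_on_const]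
        finite_imp_bounded[OF finite_subset[of _ "{0, 1}"]])
qed

lemma
  assumes "\<phi> \<in> characters A u"
  shows character_add: "f \<in> A \<Longrightarrow> g \<in> A \<Longrightarrow> \<phi> (\<lambda>x. f x + g x) = \<phi> f + \<phi> g"
    and character_mult: "f \<in> A \<Longrightarrow> g \<in> A \<Longrightarrow> \<phi> (\<lambda>x. f x * g x) = \<phi> f * \<phi> g"
    and character_cmult: "f \<in> A \<Longrightarrow> \<phi> (\<lambda>x. c * f x) = c * \<phi> f"
    and character_unit: "\<phi> u = 1"
  using assms unfolding characters_def by auto

lemma character_zero:
  assumes "\<phi> \<in> characters A u" and "f \<in> A"
  shows "\<phi> (\<lambda>x. 0) = 0"
  using character_cmult[OF assms, of 0] by simp

lemma character_idempotent:
  assumes \<phi>: "\<phi> \<in> characters A u" and "e \<in> A" and "\<And>x. e x * e x = e x"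
  shows "\<phi> e = 0 \<or> \<phi> e = 1"
proof -
  have "\<phi> e = \<phi> e * \<phi> e"
    using character_mult[OF \<phi> \<open>e \<in> A\<close> \<open>e \<in> A\<close>] assms(3) by simp
  then show ?thesis by (metis mult_cancel_left1)
qed

lemma character_invertible_nonzero:
  assumes \<phi>: "\<phi> \<in> characters A u" and "f \<in> A" "g \<in> A" and "(\<lambda>x. f x * g x) = u"
  shows "\<phi> f \<noteq> 0"
  using character_mult[OF \<phi> assms(2,3)] character_unit[OF \<phi>] assms(4) by auto

abbreviation one_DN :: "nat \<times> complex \<Rightarrow> complex" where
  "one_DN \<equiv> indicator (UNIV \<times> ball 0 1)"

definition seq_of_scalars :: "(nat \<Rightarrow> complex) \<Rightarrow> nat \<times> complex \<Rightarrow> complex" where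
  "seq_of_scalars c = (\<lambda>(k, w). if w \<in> ball 0 1 then c k else 0)"

definition const_seq :: "(complex \<Rightarrow> complex) \<Rightarrow> nat \<times> complex \<Rightarrow> complex" where
  "const_seq f = (\<lambda>(k, w). f w)"

lemma seq_of_scalars_Hinf_DN: "bounded (range c) \<Longrightarrow> seq_of_scalars c \<in> Hinf_DN"
  unfolding Hinf_DN_def seq_of_scalars_def
  by (auto intro: holomorphic_transform[of "\<lambda>_. c k" for k] bounded_subset)

lemma seq_of_scalars_one: "seq_of_scalars (\<lambda>_. 1) = one_DN"
  by (auto simp: seq_of_scalars_def indicator_def)

lemma Hinf_DN_one: "one_DN \<in> Hinf_DN"
  using seq_of_scalars_Hinf_DN[of "\<lambda>_. 1"] by (simp add: seq_of_scalars_one)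

lemma const_seq_Hinf_DN: "f \<in> Hinf_disk \<Longrightarrow> const_seq f \<in> Hinf_DN"
  unfolding Hinf_DN_def Hinf_disk_def const_seq_def
  by (auto intro: bounded_subset)

lemma Hinf_DN_inverse:
  assumes h: "h \<in> Hinf_DN" and "0 < d" and low: "\<And>k w. w \<in> ball 0 1 \<Longrightarrow> d \<le> norm (h (k, w))"
  obtains g where "g \<in> Hinf_DN" and "(\<lambda>x. h x * g x) = one_DN"
proof
  define g where "g = (\<lambda>(k, w). if w \<in> ball 0 1 then 1 / h (k, w) else 0)"
  have nz: "h (k, w) \<noteq> 0" if "w \<in> ball 0 1" for k w
    using low[OF that, of k] \<open>0 < d\<close> by auto
  have "(\<lambda>w. 1 / h (k, w)) holomorphic_on ball 0 1" for k
    using h nz unfolding Hinf_DN_def by (auto intro!: holomorphic_intros)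
  then have "(\<lambda>w. g (k, w)) holomorphic_on ball 0 1" for k
    by (rule holomorphic_transform) (simp add: g_def)
  moreover have "norm (g (k, w)) \<le> 1 / d" for k w
  proof (cases "w \<in> ball 0 1")
    case True
    then show ?thesis
      using low[OF True, of k] \<open>0 < d\<close> by (simp add: g_def norm_divide divide_simps)
  qed (use \<open>0 < d\<close> in \<open>simp add: g_def\<close>)
  ultimately show "g \<in> Hinf_DN"
    unfolding Hinf_DN_def bounded_iff by (fastforce simp: g_def)
  show "(\<lambda>x. h x * g x) = one_DN"
    using nz by (auto simp: g_def indicator_def fun_eq_iff)
qed

lemma M_DN_value_approx:
  assumes "\<phi> \<in> M_DN" and h: "h \<in> Hinf_DN" and "0 < d"
  shows "\<exists>k. \<exists>w\<in>ball 0 1. norm (h (k, w) - \<phi> h) < d"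
proof (rule ccontr)
  assume far: "\<not> ?thesis"
  have \<phi>: "\<phi> \<in> characters Hinf_DN one_DN"
    using assms(1) by (simp add: M_DN_def)
  define s where "s = (\<lambda>x. h x + (- \<phi> h) * one_DN x)"
  have low: "d \<le> norm (s (k, w))" if "w \<in> ball 0 1" for k w
    using far that by (auto simp: s_def not_less)
  have s: "s \<in> Hinf_DN"
    unfolding s_def using h Hinf_DN_one by (intro Hinf_DN_add Hinf_DN_cmult)
  obtain g where "g \<in> Hinf_DN" and "(\<lambda>x. s x * g x) = one_DN"
    using Hinf_DN_inverse[OF s \<open>0 < d\<close> low] by blast
  then have "\<phi> s \<noteq> 0"
    using \<phi> s by (intro character_invertible_nonzero)
  moreover have "\<phi> s = 0"
    unfolding s_def character_add[OF \<phi> h Hinf_DN_cmult[OF Hinf_DN_one]]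
      character_cmult[OF \<phi> Hinf_DN_one] character_unit[OF \<phi>]
    by simp
  ultimately show False by contradiction
qed

lemma M_DN_norm_le:
  assumes \<phi>: "\<phi> \<in> M_DN" and h: "h \<in> Hinf_DN"
    and bound: "\<And>k w. w \<in> ball 0 1 \<Longrightarrow> norm (h (k, w)) \<le> M"
  shows "norm (\<phi> h) \<le> M"
proof (rule field_le_epsilon)
  fix d :: real assume "0 < d"
  then obtain k w where "w \<in> ball 0 1" "norm (h (k, w) - \<phi> h) < d"
    using M_DN_value_approx[OF \<phi> h] by blast
  with bound[of w k] show "norm (\<phi> h) \<le> M + d"
    by (smt (verit) norm_minus_commute norm_triangle_ineq2)
qed

lemma
  assumes \<phi>: "\<phi> \<in> M_DN" and a: "bounded (range a)" and b: "bounded (range b)"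
  shows M_DN_seq_of_scalars_add:
      "\<phi> (seq_of_scalars (\<lambda>k. a k + b k)) = \<phi> (seq_of_scalars a) + \<phi> (seq_of_scalars b)"
    and M_DN_seq_of_scalars_mult:
      "\<phi> (seq_of_scalars (\<lambda>k. a k * b k)) = \<phi> (seq_of_scalars a) * \<phi> (seq_of_scalars b)"
proof -
  have "seq_of_scalars (\<lambda>k. a k + b k) = (\<lambda>x. seq_of_scalars a x + seq_of_scalars b x)"
    and "seq_of_scalars (\<lambda>k. a k * b k) = (\<lambda>x. seq_of_scalars a x * seq_of_scalars b x)"
    by (auto simp: seq_of_scalars_def fun_eq_iff)
  then show "\<phi> (seq_of_scalars (\<lambda>k. a k + b k)) = \<phi> (seq_of_scalars a) + \<phi> (seq_of_scalars b)"
    and "\<phi> (seq_of_scalars (\<lambda>k. a k * b k)) = \<phi> (seq_of_scalars a) * \<phi> (seq_of_scalars b)"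
    using \<phi> seq_of_scalars_Hinf_DN[OF a] seq_of_scalars_Hinf_DN[OF b]
    unfolding M_DN_def by (simp_all add: character_add character_mult)
qed

lemma M_DN_seq_of_scalars_const:
  assumes "\<phi> \<in> M_DN"
  shows "\<phi> (seq_of_scalars (\<lambda>k. c)) = c"
proof -
  have "seq_of_scalars (\<lambda>k. c) = (\<lambda>x. c * one_DN x)"
    by (auto simp: seq_of_scalars_def indicator_def fun_eq_iff)
  then show ?thesis
    using assms Hinf_DN_one unfolding M_DN_def by (simp add: character_cmult character_unit)
qed

lemma bounded_range_indicator: "bounded (range (indicator A :: 'a \<Rightarrow> complex))"
  by (rule finite_imp_bounded[OF finite_subset[of _ "{0, 1}"]]) (auto simp: indicator_def)

lemma M_DN_seq_near_value:
  assumes \<phi>: "\<phi> \<in> M_DN" and c: "bounded (range c)" and "0 < \<epsilon>"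
  shows "\<phi> (seq_of_scalars (indicator {k. norm (c k - \<phi> (seq_of_scalars c)) < \<epsilon>})) = 1"
proof -
  define \<nu> where "\<nu> = \<phi> (seq_of_scalars c)"
  define e :: "nat \<Rightarrow> complex" where "e = indicator {k. norm (c k - \<nu>) < \<epsilon>}"
  have e: "bounded (range e)"
    unfolding e_def by (rule bounded_range_indicator)
  have "\<phi> (seq_of_scalars e) = 0 \<or> \<phi> (seq_of_scalars e) = 1"
    using \<phi> seq_of_scalars_Hinf_DN[OF e] unfolding M_DN_def e_def
    by (rule character_idempotent) (auto simp: seq_of_scalars_def indicator_def)
  moreover have "\<phi> (seq_of_scalars e) \<noteq> 0"
  proof
    assume e0: "\<phi> (seq_of_scalars e) = 0"
    \<comment> \<open>Then replacing c by \<nu> + \<epsilon> on the indicator set does not change the value of \<phi>,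
      but keeps the whole range at distance at least \<epsilon> from it.\<close>
    define d where "d = (\<lambda>k. \<nu> + \<epsilon> - c k)"
    have d: "bounded (range d)"
      unfolding d_def using c by (intro bounded_minus_comp) (simp_all add: image_constant_conv)
    have de: "bounded (range (\<lambda>k. d k * e k))"
      using d e by (rule bounded_mult_comp)
    define h where "h = seq_of_scalars (\<lambda>k. c k + d k * e k)"
    have "\<phi> h = \<nu>"
      unfolding h_def M_DN_seq_of_scalars_add[OF \<phi> c de] M_DN_seq_of_scalars_mult[OF \<phi> d e]
      by (simp add: e0 \<nu>_def)
    moreover have "\<epsilon> \<le> norm (h (k, w) - \<nu>)" if "w \<in> ball 0 1" for k w
      using that \<open>0 < \<epsilon>\<close> by (auto simp: h_def d_def e_def seq_of_scalars_def indicator_def not_less)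
    moreover have "h \<in> Hinf_DN"
      unfolding h_def using c de by (intro seq_of_scalars_Hinf_DN bounded_plus_comp)
    ultimately show False
      using M_DN_value_approx[OF \<phi> _ \<open>0 < \<epsilon>\<close>] by (metis not_less)
  qed
  ultimately show ?thesis by (simp add: e_def \<nu>_def)
qed

text \<open>The Schwarz lemma is applied to r p composed with the Moebius map sending 0 to a for
  every r < 1, since p is only bounded by 1 and not by a constant less than 1.\<close>
lemma Schwarz_Pick_Moebius:
  assumes p: "p holomorphic_on ball 0 1" and bound: "\<And>\<mu>. \<mu> \<in> ball 0 1 \<Longrightarrow> norm (p \<mu>) \<le> 1"
    and "p a = 0" and a: "a \<in> ball 0 1" and b: "b \<in> ball 0 1"
  shows "norm (p b) \<le> norm (Moebius_function 0 a b)"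
proof (rule field_le_mult_one_interval)
  fix r :: real assume r: "0 < r" "r < 1"
  define s where "s = Moebius_function 0 a b"
  have s_lt: "norm s < 1" unfolding s_def using Moebius_function_norm_lt_1 a b by auto
  have b_eq: "Moebius_function 0 (- a) s = b"
    unfolding s_def by (rule Moebius_function_compose) (use a b in auto)
  have maps: "Moebius_function 0 (- a) ` ball 0 1 \<subseteq> ball 0 1"
    using Moebius_function_norm_lt_1 a by auto
  define q where "q = (\<lambda>t. r * p (Moebius_function 0 (- a) t))"
  have "q holomorphic_on ball 0 1"
    unfolding q_def using holomorphic_on_compose_gen[OF Moebius_function_holomorphic p maps] a
    by (auto simp: o_def intro!: holomorphic_intros)
  moreover have "q 0 = 0"
    by (simp add: q_def Moebius_function_of_zero \<open>p a = 0\<close>)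
  moreover have "norm (q t) < 1" if "norm t < 1" for t
  proof -
    have "norm (p (Moebius_function 0 (- a) t)) \<le> 1"
      using maps that by (intro bound) (auto simp: image_subset_iff)
    then have "norm (q t) \<le> r"
      using r by (simp add: q_def norm_mult mult_left_le)
    then show ?thesis
      using r by linarith
  qed
  ultimately have "norm (q s) \<le> norm s"
    using s_lt by (rule Schwarz_Lemma(1))
  moreover have "norm (q s) = r * norm (p b)"
    using r by (simp add: q_def b_eq norm_mult)
  ultimately show "r * norm (p b) \<le> norm (Moebius_function 0 a b)"
    by (simp add: s_def)
qed

definition disk_part :: "((nat \<times> complex \<Rightarrow> complex) \<Rightarrow> complex) \<Rightarrow> (complex \<Rightarrow> complex) \<Rightarrow> complex" where
  "disk_part \<phi> = (\<lambda>f. if f \<in> Hinf_disk then \<phi> (const_seq f) else 0)"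

lemma disk_part_M_disk:
  assumes "\<phi> \<in> M_DN"
  shows "disk_part \<phi> \<in> M_disk"
  unfolding M_disk_def characters_def
proof (intro CollectI conjI ballI allI impI)
  have \<phi>: "\<phi> \<in> characters Hinf_DN one_DN"
    using assms by (simp add: M_DN_def)
  fix f g c assume f: "f \<in> Hinf_disk" and g: "g \<in> Hinf_disk"
  have "const_seq (\<lambda>x. f x + g x) = (\<lambda>x. const_seq f x + const_seq g x)"
    and "const_seq (\<lambda>x. f x * g x) = (\<lambda>x. const_seq f x * const_seq g x)"
    and "const_seq (\<lambda>x. c * f x) = (\<lambda>x. c * const_seq f x)"
    by (auto simp: const_seq_def)
  then show "disk_part \<phi> (\<lambda>x. f x + g x) = disk_part \<phi> f + disk_part \<phi> g"
    and "disk_part \<phi> (\<lambda>x. f x * g x) = disk_part \<phi> f * disk_part \<phi> g"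
    and "disk_part \<phi> (\<lambda>x. c * f x) = c * disk_part \<phi> f"
    using const_seq_Hinf_DN[OF f] const_seq_Hinf_DN[OF g] f g
    by (simp_all add: disk_part_def Hinf_disk_add Hinf_disk_mult Hinf_disk_cmult
        character_add[OF \<phi>] character_mult[OF \<phi>] character_cmult[OF \<phi>])
next
  have "const_seq (indicator (ball 0 1)) = one_DN"
    by (auto simp: const_seq_def indicator_def)
  then show "disk_part \<phi> (indicator (ball 0 1)) = 1"
    using assms Hinf_disk_one by (simp add: disk_part_def M_DN_def character_unit)
qed (simp add: disk_part_def)

lemma M_s_gleason_part: "\<xi> \<in> M_s \<Longrightarrow> \<eta> \<in> gleason_part \<xi> \<Longrightarrow> \<eta> = \<xi>"
  unfolding M_s_def M_a_def by blast

lemma polydisk_upd_last: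
  assumes "z \<in> polydisk (n - 1)" and "1 \<le> n" and "w \<in> ball 0 1"
  shows "z(n - 1 := w) \<in> polydisk n"
  using assms unfolding polydisk_def by auto

lemma iota_Hinf_poly:
  assumes f: "f \<in> Hinf_disk" and "j < n"
  shows "iota n j f \<in> Hinf_poly n"
proof -
  have coord: "z j \<in> ball 0 1" if "z \<in> polydisk n" for z
    using that \<open>j < n\<close> by (simp add: polydisk_def)
  have "continuous_on (polydisk n) (\<lambda>z. f (z j))"
  proof (rule continuous_on_compose2[of "ball 0 1" f])
    show "continuous_on (ball 0 1) f"
      using f unfolding Hinf_disk_def by (blast intro: holomorphic_on_imp_continuous_on)
    show "continuous_on (polydisk n) (\<lambda>z. z j)"
      by (rule continuous_on_subset[OF continuous_on_product_coordinates]) simp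
  qed (use coord in auto)
  then have "continuous_on (polydisk n) (iota n j f)"
    by (rule continuous_on_cong[THEN iffD1, rotated 2]) (simp_all add: iota_def)
  moreover have "(\<lambda>w. iota n j f (z(i := w))) holomorphic_on ball 0 1"
    if "z \<in> polydisk n" "i < n" for z i
  proof (cases "i = j")
    case True
    then show ?thesis
      using that f unfolding Hinf_disk_def
      by (auto simp: iota_def polydisk_def intro: holomorphic_transform)
  next
    case False
    then show ?thesis
      using that by (auto simp: iota_def polydisk_def intro: holomorphic_transform[of "\<lambda>_. f (z j)"])
  qed
  moreover have "bounded (iota n j f ` polydisk n)"
    using f coord unfolding Hinf_disk_def iota_def by (auto intro: bounded_subset)
  ultimately show ?thesis
    unfolding Hinf_poly_def by (simp add: iota_def)
qed

lemma Rop_Hinf_DN: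
  assumes z: "\<forall>k. z k \<in> polydisk (n - 1)" and "1 \<le> n" and f: "f \<in> Hinf_poly n"
  shows "Rop n z f \<in> Hinf_DN"
proof -
  have slice: "(z k)(n - 1 := w) \<in> polydisk n" if "w \<in> ball 0 1" for k w
    using z \<open>1 \<le> n\<close> that by (blast intro: polydisk_upd_last)
  have "(\<lambda>w. f (y(n - 1 := w))) holomorphic_on ball 0 1" if "y \<in> polydisk n" for y
    using f that \<open>1 \<le> n\<close> unfolding Hinf_poly_def by auto
  from this[OF slice[of 0]]
  have "(\<lambda>w. f ((z k)(n - 1 := w))) holomorphic_on ball 0 1" for k
    by simp
  then have "(\<lambda>w. Rop n z f (k, w)) holomorphic_on ball 0 1" for k
    by (rule holomorphic_transform) (simp add: Rop_def)
  moreover have "Rop n z f ` (UNIV \<times> ball 0 1) \<subseteq> f ` polydisk n"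
    using slice by (auto simp: Rop_def)
  ultimately show ?thesis
    using f unfolding Hinf_DN_def Hinf_poly_def by (auto simp: Rop_def intro: bounded_subset)
qed

lemma Rstar_M_poly:
  assumes \<phi>: "\<phi> \<in> M_DN" and z: "\<forall>k. z k \<in> polydisk (n - 1)" and "1 \<le> n"
  shows "Rstar n z \<phi> \<in> M_poly n"
  unfolding M_poly_def characters_def
proof (intro CollectI conjI ballI allI impI)
  have \<phi>: "\<phi> \<in> characters Hinf_DN one_DN"
    using assms by (simp add: M_DN_def)
  fix f g c assume f: "f \<in> Hinf_poly n" and g: "g \<in> Hinf_poly n"
  have "Rop n z (\<lambda>x. f x + g x) = (\<lambda>x. Rop n z f x + Rop n z g x)"
    and "Rop n z (\<lambda>x. f x * g x) = (\<lambda>x. Rop n z f x * Rop n z g x)"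
    and "Rop n z (\<lambda>x. c * f x) = (\<lambda>x. c * Rop n z f x)"
    by (auto simp: Rop_def)
  then show "Rstar n z \<phi> (\<lambda>x. f x + g x) = Rstar n z \<phi> f + Rstar n z \<phi> g"
    and "Rstar n z \<phi> (\<lambda>x. f x * g x) = Rstar n z \<phi> f * Rstar n z \<phi> g"
    and "Rstar n z \<phi> (\<lambda>x. c * f x) = c * Rstar n z \<phi> f"
    using Rop_Hinf_DN[OF z \<open>1 \<le> n\<close> f] Rop_Hinf_DN[OF z \<open>1 \<le> n\<close> g] f g
    by (simp_all add: Rstar_def Hinf_poly_add Hinf_poly_mult Hinf_poly_cmult
        character_add[OF \<phi>] character_mult[OF \<phi>] character_cmult[OF \<phi>])
next
  have "Rop n z (indicator (polydisk n)) = one_DN"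
    using z \<open>1 \<le> n\<close> polydisk_upd_last by (auto simp: Rop_def indicator_def)
  then show "Rstar n z \<phi> (indicator (polydisk n)) = 1"
    using assms Hinf_poly_one by (simp add: Rstar_def M_DN_def character_unit)
qed (simp add: Rstar_def)

lemma pi_n_Rstar_coord:
  assumes z: "\<forall>k. z k \<in> polydisk (n - 1)" and "j < n - 1"
  shows "pi_n n (Rstar n z \<phi>) j
    = (\<lambda>f. if f \<in> Hinf_disk then \<phi> (seq_of_scalars (\<lambda>k. f (z k j))) else 0)"
proof -
  have "Rop n z (iota n j f) = seq_of_scalars (\<lambda>k. f (z k j))" for f
    using z \<open>j < n - 1\<close> polydisk_upd_last
    by (fastforce simp: Rop_def iota_def seq_of_scalars_def)
  moreover have "j < n"
    using \<open>j < n - 1\<close> by simp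
  ultimately show ?thesis
    using iota_Hinf_poly by (auto simp: pi_n_def Rstar_def)
qed

lemma pi_n_Rstar_last:
  assumes z: "\<forall>k. z k \<in> polydisk (n - 1)" and "1 \<le> n"
  shows "pi_n n (Rstar n z \<phi>) (n - 1) = disk_part \<phi>"
proof
  fix f
  show "pi_n n (Rstar n z \<phi>) (n - 1) f = disk_part \<phi> f"
  proof (cases "f \<in> Hinf_disk")
    case True
    then have "Rop n z (iota n (n - 1) f) = const_seq f"
      using z \<open>1 \<le> n\<close> polydisk_upd_last
      by (fastforce simp: Rop_def iota_def const_seq_def Hinf_disk_def)
    then show ?thesis
      using iota_Hinf_poly[OF True] True \<open>1 \<le> n\<close> by (simp add: pi_n_def Rstar_def disk_part_def)
  qed (use \<open>1 \<le> n\<close> in \<open>simp add: pi_n_def disk_part_def\<close>)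
qed

locale holomorphic_character_map =
  fixes \<tau> :: "complex \<Rightarrow> (nat \<times> complex \<Rightarrow> complex) \<Rightarrow> complex"
  assumes character: "\<mu> \<in> ball 0 1 \<Longrightarrow> \<tau> \<mu> \<in> M_DN"
    and holomorphic: "h \<in> Hinf_DN \<Longrightarrow> (\<lambda>\<mu>. \<tau> \<mu> h) holomorphic_on ball 0 1"
begin

lemma idempotent_value_const:
  assumes e: "e \<in> Hinf_DN" and idem: "\<And>x. e x * e x = e x"
    and "l \<in> ball 0 1" "l' \<in> ball 0 1"
  shows "\<tau> l e = \<tau> l' e"
proof -
  have "(\<lambda>\<mu>. \<tau> \<mu> e) ` ball 0 1 \<subseteq> {0, 1}"
    using character_idempotent[OF character[unfolded M_DN_def] e idem] by blast
  then have "(\<lambda>\<mu>. \<tau> \<mu> e) constant_on ball 0 1"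
    by (intro continuous_finite_range_constant holomorphic_on_imp_continuous_on holomorphic e)
       (auto intro: finite_subset)
  then show ?thesis
    using assms(3,4) unfolding constant_on_def by metis
qed

lemma seq_of_scalars_value_const:
  assumes c: "bounded (range c)" and l: "l \<in> ball 0 1" and l': "l' \<in> ball 0 1"
  shows "\<tau> l (seq_of_scalars c) = \<tau> l' (seq_of_scalars c)"
proof (rule ccontr)
  assume ne: "\<tau> l (seq_of_scalars c) \<noteq> \<tau> l' (seq_of_scalars c)"
  define \<epsilon> where "\<epsilon> = norm (\<tau> l (seq_of_scalars c) - \<tau> l' (seq_of_scalars c)) / 2"
  have "0 < \<epsilon>" using ne by (simp add: \<epsilon>_def)
  define e e' :: "nat \<Rightarrow> complex"
    where "e = indicator {k. norm (c k - \<tau> l (seq_of_scalars c)) < \<epsilon>}"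
      and "e' = indicator {k. norm (c k - \<tau> l' (seq_of_scalars c)) < \<epsilon>}"
  have e: "bounded (range e)" and e': "bounded (range e')"
    unfolding e_def e'_def by (rule bounded_range_indicator)+
  have "\<tau> l (seq_of_scalars e) = 1"
    unfolding e_def using M_DN_seq_near_value[OF character[OF l] c \<open>0 < \<epsilon>\<close>] .
  moreover have "\<tau> l (seq_of_scalars e') = \<tau> l' (seq_of_scalars e')"
    by (rule idempotent_value_const[OF seq_of_scalars_Hinf_DN[OF e'] _ l l'])
      (auto simp: e'_def seq_of_scalars_def indicator_def)
  moreover have "\<tau> l' (seq_of_scalars e') = 1"
    unfolding e'_def using M_DN_seq_near_value[OF character[OF l'] c \<open>0 < \<epsilon>\<close>] .
  moreover have "(\<lambda>k. e k * e' k) = (\<lambda>k. 0)"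
  proof -
    have "\<not> (norm (c k - \<tau> l (seq_of_scalars c)) < \<epsilon> \<and> norm (c k - \<tau> l' (seq_of_scalars c)) < \<epsilon>)" for k
      using norm_triangle_ineq4[of "c k - \<tau> l' (seq_of_scalars c)" "c k - \<tau> l (seq_of_scalars c)"]
      by (auto simp: \<epsilon>_def norm_minus_commute)
    then show ?thesis by (auto simp: e_def e'_def indicator_def)
  qed
  then have "\<tau> l (seq_of_scalars e) * \<tau> l (seq_of_scalars e') = 0"
    using M_DN_seq_of_scalars_mult[OF character[OF l] e e'] M_DN_seq_of_scalars_const[OF character[OF l]]
    by metis
  ultimately show False by simp
qed

lemma disk_part_gleason_part:
  assumes l: "l \<in> ball 0 1" and l': "l' \<in> ball 0 1"
  shows "disk_part (\<tau> l) \<in> gleason_part (disk_part (\<tau> l'))"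
proof -
  define S where "S = {norm (disk_part (\<tau> l) f) | f. f \<in> Hinf_disk \<and> disk_part (\<tau> l') f = 0
    \<and> (\<forall>w\<in>ball 0 1. norm (f w) \<le> 1)}"
  have zero: "(\<lambda>w. 0) \<in> Hinf_disk"
    using Hinf_disk_cmult[OF Hinf_disk_one, of 0] by simp
  have "disk_part (\<tau> \<mu>) (\<lambda>w. 0) = 0" if "\<mu> \<in> ball 0 1" for \<mu>
    using zero character_zero[OF character[OF that, unfolded M_DN_def] Hinf_DN_one]
    by (simp add: disk_part_def const_seq_def case_prod_unfold)
  then have "0 \<in> S"
    unfolding S_def using zero l l' by (intro CollectI exI[of _ "\<lambda>w. 0"]) auto
  moreover have "x \<le> norm (Moebius_function 0 l' l)" if "x \<in> S" for x
  proof -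
    obtain f where f: "f \<in> Hinf_disk" and "disk_part (\<tau> l') f = 0"
      and f_le: "\<forall>w\<in>ball 0 1. norm (f w) \<le> 1" and x: "x = norm (disk_part (\<tau> l) f)"
      using \<open>x \<in> S\<close> unfolding S_def by blast
    have "norm (\<tau> l (const_seq f)) \<le> norm (Moebius_function 0 l' l)"
    proof (rule Schwarz_Pick_Moebius[OF holomorphic[OF const_seq_Hinf_DN[OF f]] _ _ l' l])
      show "norm (\<tau> \<mu> (const_seq f)) \<le> 1" if "\<mu> \<in> ball 0 1" for \<mu>
        using f_le
        by (intro M_DN_norm_le[OF character[OF that] const_seq_Hinf_DN[OF f]])
          (simp add: const_seq_def)
      show "\<tau> l' (const_seq f) = 0"
        using \<open>disk_part (\<tau> l') f = 0\<close> f by (simp add: disk_part_def)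
    qed
    then show ?thesis
      using f by (simp add: x disk_part_def)
  qed
  ultimately have "rho (disk_part (\<tau> l')) (disk_part (\<tau> l)) \<le> norm (Moebius_function 0 l' l)"
    unfolding rho_def S_def[symmetric] by (intro cSup_least) auto
  also have "\<dots> < 1"
    using Moebius_function_norm_lt_1 l l' by auto
  finally show ?thesis
    unfolding gleason_part_def using disk_part_M_disk[OF character[OF l]] by simp
qed

lemma disk_part_const:
  assumes "l \<in> ball 0 1" "l' \<in> ball 0 1" and "disk_part (\<tau> l') \<in> M_s"
  shows "disk_part (\<tau> l) = disk_part (\<tau> l')"
  using assms M_s_gleason_part disk_part_gleason_part by blast

lemma pi_n_Rstar_const:
  assumes z: "\<forall>k. z k \<in> polydisk (n - 1)" and "1 \<le> n"
    and l: "l \<in> ball 0 1" and l': "l' \<in> ball 0 1" and "disk_part (\<tau> l') \<in> M_s"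
  shows "pi_n n (Rstar n z (\<tau> l)) = pi_n n (Rstar n z (\<tau> l'))"
proof
  fix j
  consider "j < n - 1" | "j = n - 1" | "n \<le> j"
    by linarith
  then show "pi_n n (Rstar n z (\<tau> l)) j = pi_n n (Rstar n z (\<tau> l')) j"
  proof cases
    case 1
    have "bounded (range (\<lambda>k. f (z k j)))" if "f \<in> Hinf_disk" for f
      using that z 1 unfolding Hinf_disk_def polydisk_def by (auto intro: bounded_subset)
    then show ?thesis
      using 1 z seq_of_scalars_value_const[OF _ l l'] by (auto simp: pi_n_Rstar_coord)
  next
    case 2
    then show ?thesis
      using pi_n_Rstar_last[OF z \<open>1 \<le> n\<close>] disk_part_const[OF l l' \<open>disk_part (\<tau> l') \<in> M_s\<close>]
      by simp
  qed (simp add: pi_n_def)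
qed

end

lemma analytic_disk_M_DN:
  assumes "analytic_disk Hinf_DN one_DN G"
  obtains \<tau> where "holomorphic_character_map \<tau>" and "G = \<tau> ` ball 0 1"
  using assms unfolding analytic_disk_def holomorphic_character_map_def M_DN_def
  by (metis image_subset_iff)

theorem lemma5p2:
  fixes n :: nat
    and \<xi> :: "nat \<Rightarrow> (complex \<Rightarrow> complex) \<Rightarrow> complex"
    and z :: "nat \<Rightarrow> nat \<Rightarrow> complex"
    and G :: "((nat \<times> complex \<Rightarrow> complex) \<Rightarrow> complex) set"
    and \<eta> :: "((nat \<Rightarrow> complex) \<Rightarrow> complex) \<Rightarrow> complex"
  assumes "n \<ge> 2"
    and "\<xi> \<in> (\<Pi>\<^sub>E j\<in>{..<n}. M_disk)"
    and "\<forall>j<n - 1. \<xi> j \<in> M_a"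
    and "\<xi> (n - 1) \<in> M_s"
    and "\<forall>k. z k \<in> polydisk (n - 1)"
    and "\<exists>a :: nat \<Rightarrow> nat \<Rightarrow> complex. (\<forall>j<n - 1. interpolating_disk (a j)) \<and>
           range z = {w \<in> polydisk (n - 1). \<forall>j<n - 1. w j \<in> range (a j)}"
    and "interpolating_poly (n - 1) z"
    and "restrict \<xi> {..<n - 1} \<in>
           (product_topology (\<lambda>j. weakstar Hinf_disk M_disk) {..<n - 1})
             closure_of ((\<lambda>k. \<lambda>j\<in>{..<n - 1}. ev_disk (z k j)) ` UNIV)"
    and "analytic_disk Hinf_DN (indicator (UNIV \<times> ball 0 1)) G"
    and "\<eta> \<in> Rstar n z ` G"
    and "\<eta> \<in> fiber n \<xi>"
  shows "Rstar n z ` G \<subseteq> fiber n \<xi>"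
proof -
  have "1 \<le> n"
    using assms(1) by simp
  obtain \<tau> where \<tau>: "holomorphic_character_map \<tau>" and G: "G = \<tau> ` ball 0 1"
    using analytic_disk_M_DN assms(9) by blast
  obtain l' where l': "l' \<in> ball 0 1" and \<eta>: "\<eta> = Rstar n z (\<tau> l')"
    using assms(10) G by blast
  have \<pi>: "pi_n n (Rstar n z (\<tau> l')) = \<xi>"
    using assms(11) by (simp add: \<eta> fiber_def)
  have "disk_part (\<tau> l') = pi_n n (Rstar n z (\<tau> l')) (n - 1)"
    unfolding pi_n_Rstar_last[OF assms(5) \<open>1 \<le> n\<close>] ..
  then have singular: "disk_part (\<tau> l') \<in> M_s"
    using assms(4) \<pi> by simp
  show ?thesis
  proof
    fix \<psi> assume "\<psi> \<in> Rstar n z ` G"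
    then obtain l where l: "l \<in> ball 0 1" and \<psi>: "\<psi> = Rstar n z (\<tau> l)"
      using G by blast
    have "pi_n n \<psi> = \<xi>"
      using holomorphic_character_map.pi_n_Rstar_const[OF \<tau> assms(5) \<open>1 \<le> n\<close> l l' singular]
      by (simp add: \<psi> \<pi>)
    moreover have "\<psi> \<in> M_poly n"
      unfolding \<psi> using holomorphic_character_map.character[OF \<tau> l] assms(5) \<open>1 \<le> n\<close>
      by (rule Rstar_M_poly)
    ultimately show "\<psi> \<in> fiber n \<xi>"
      by (simp add: fiber_def)
  qed
qed

end
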